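(* There exists $c>0$ such that for every positive integer $t$ there is $\alpha=\alpha(t)>0$ with the following property: every quasi-comparability graph of complexity $t$ on $n$ vertices contains a clique or an independent set of size at least $\alpha n^{c}$.
   Context: For $\mathbf{x},\mathbf{y}\in\mathbb{R}^t$ write $\mathbf{x}\prec\mathbf{y}$ if $\mathbf{x}(i)<\mathbf{y}(i)$ for every $i\in[t]$. A quasi-comparability graph of complexity $t$ is a finite simple graph $G$ with $V(G)\subset\mathbb{R}^t\times\mathbb{R}^t$ in which distinct vertices $(\mathbf{x},\mathbf{y})$ and $(\mathbf{x}',\mathbf{y}')$ are adjacent iff $\mathbf{x}\prec\mathbf{y}'$ or $\mathbf{x}'\prec\mathbf{y}$. *)

theory Defs
  imports Complex_Main
begin

text \<open>Vectors in R^t are represented as real lists of length t.\<close>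

definition vec_prec :: "nat \<Rightarrow> real list \<Rightarrow> real list \<Rightarrow> bool" where
  "vec_prec t x y \<longleftrightarrow> (\<forall>i<t. x ! i < y ! i)"

definition qc_points :: "nat \<Rightarrow> (real list \<times> real list) set" where
  "qc_points t = {(x, y). length x = t \<and> length y = t}"

definition qc_adj :: "nat \<Rightarrow> real list \<times> real list \<Rightarrow> real list \<times> real list \<Rightarrow> bool" where
  "qc_adj t u v \<longleftrightarrow> u \<noteq> v \<and> (vec_prec t (fst u) (snd v) \<or> vec_prec t (fst v) (snd u))"

text \<open>A quasi-comparability graph of complexity t is determined by its finite vertex set
  V \<subseteq> R^t \<times> R^t; its edges are given by qc_adj.\<close>
definition qc_graph :: "nat \<Rightarrow> (real list \<times> real list) set \<Rightarrow> bool" where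
  "qc_graph t V \<longleftrightarrow> finite V \<and> V \<subseteq> qc_points t"

definition qc_clique :: "nat \<Rightarrow> (real list \<times> real list) set \<Rightarrow> bool" where
  "qc_clique t S \<longleftrightarrow> (\<forall>u\<in>S. \<forall>v\<in>S. u \<noteq> v \<longrightarrow> qc_adj t u v)"

definition qc_indep :: "nat \<Rightarrow> (real list \<times> real list) set \<Rightarrow> bool" where
  "qc_indep t S \<longleftrightarrow> (\<forall>u\<in>S. \<forall>v\<in>S. \<not> qc_adj t u v)"

end

theory Submission
  imports Defs "HOL-Library.FuncSet" "HOL-Library.Log_Nat"
begin

text \<open>For each coordinate \<open>i\<close> the relation \<open>x\<^sub>i(u) < y\<^sub>i(v)\<close> becomes transitive after passing to a
  subset of relative size \<open>1/(2 log n + 2)\<close>: the vertices with \<open>y\<^sub>i(u) \<le> x\<^sub>i(u)\<close> already form a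
  transitive set, and the genuine intervals \<open>[x\<^sub>i(u), y\<^sub>i(u))\<close> are split at a median left endpoint
  into those containing it (a transitive set) and those entirely to its left or right, which are
  treated recursively and stack transitively. After all \<open>t\<close> coordinates we keep
  \<open>n / (2 log n + 2)\<^sup>t\<close> vertices on which \<open>x(u) \<prec> y(v)\<close> is transitive; its comparability graph is the
  induced subgraph, so Mirsky's theorem gives a clique or an independent set of size \<open>s\<close> with
  \<open>n \<le> (2 log n + 2)\<^sup>t s\<^sup>2\<close>. Squaring and using \<open>(log n)\<^sup>2\<^sup>t = O\<^sub>t(n)\<close> gives \<open>n = O\<^sub>t(s\<^sup>4)\<close>.\<close>

lemma finite_obtains_arg_max:
  fixes f :: "'a \<Rightarrow> 'b::linorder"
  assumes "finite S" and "S \<noteq> {}"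
  obtains u where "u \<in> S" and "\<And>v. v \<in> S \<Longrightarrow> f v \<le> f u"
proof -
  have "Max (f ` S) \<in> f ` S"
    using assms by simp
  then obtain u where u: "u \<in> S" "Max (f ` S) = f u"
    by blast
  have "f v \<le> f u" if "v \<in> S" for v
    using Max_ge[of "f ` S" "f v"] that assms(1) u(2) by simp
  with u(1) that show thesis
    by blast
qed

lemma finite_obtains_arg_min:
  fixes f :: "'a \<Rightarrow> 'b::linorder"
  assumes "finite S" and "S \<noteq> {}"
  obtains u where "u \<in> S" and "\<And>v. v \<in> S \<Longrightarrow> f u \<le> f v"
proof -
  have "Min (f ` S) \<in> f ` S"
    using assms by simp
  then obtain u where u: "u \<in> S" "Min (f ` S) = f u"
    by blast
  have "f u \<le> f v" if "v \<in> S" for v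
    using Min_le[of "f ` S" "f v"] that assms(1) u(2) by simp
  with u(1) that show thesis
    by blast
qed

lemma ex_median:
  fixes x :: "'a \<Rightarrow> 'b::linorder"
  assumes "finite W" and "W \<noteq> {}"
  shows "\<exists>p. 2 * card {u\<in>W. x u < p} \<le> card W \<and> 2 * card {u\<in>W. p < x u} \<le> card W"
proof -
  \<comment> \<open>\<open>p\<close> is the least value of \<open>x\<close> with at least half of \<open>W\<close> at or below it.\<close>
  define P where "P = {w\<in>W. card W \<le> 2 * card {u\<in>W. x u \<le> x w}}"
  obtain w\<^sub>0 where "w\<^sub>0 \<in> W" and "\<And>u. u \<in> W \<Longrightarrow> x u \<le> x w\<^sub>0"
    using finite_obtains_arg_max[OF assms, of x] by blast
  then have "{u\<in>W. x u \<le> x w\<^sub>0} = W"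
    by auto
  with \<open>w\<^sub>0 \<in> W\<close> have "P \<noteq> {}"
    unfolding P_def by auto
  moreover have "finite P"
    using assms(1) by (simp add: P_def)
  ultimately obtain w where w: "w \<in> P" "\<And>v. v \<in> P \<Longrightarrow> x w \<le> x v"
    using finite_obtains_arg_min[of P x] by blast
  define p where "p = x w"
  have "card W = card {u\<in>W. x u \<le> p} + card {u\<in>W. p < x u}"
    using card_Int_Diff[OF assms(1), of "{u. x u \<le> p}"] by (simp add: Int_def set_diff_eq not_le)
  moreover have "card W \<le> 2 * card {u\<in>W. x u \<le> p}"
    using w(1) by (simp add: P_def p_def)
  ultimately have above: "2 * card {u\<in>W. p < x u} \<le> card W"
    by linarith
  have below: "2 * card {u\<in>W. x u < p} \<le> card W"
  proof (rule ccontr)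
    assume large: "\<not> ?thesis"
    then have "{u\<in>W. x u < p} \<noteq> {}"
      by (metis card.empty mult_0_right zero_le)
    moreover have "finite {u\<in>W. x u < p}"
      using assms(1) by simp
    ultimately obtain v where v: "v \<in> {u\<in>W. x u < p}"
      and "\<And>u. u \<in> {u\<in>W. x u < p} \<Longrightarrow> x u \<le> x v"
      using finite_obtains_arg_max[of "{u\<in>W. x u < p}" x] by blast
    then have "{u\<in>W. x u < p} \<subseteq> {u\<in>W. x u \<le> x v}"
      by blast
    then have "card {u\<in>W. x u < p} \<le> card {u\<in>W. x u \<le> x v}"
      using assms(1) by (intro card_mono) auto
    with large v have "v \<in> P"
      by (simp add: P_def)
    then have "p \<le> x v"
      using w(2) by (simp add: p_def)
    with v show False
      by (simp add: not_le[symmetric])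
  qed
  from below above show ?thesis
    by blast
qed

lemma transp_on_Un_stacked:
  assumes "transp_on A R" and "transp_on B R"
    and "\<And>a b. a \<in> A \<Longrightarrow> b \<in> B \<Longrightarrow> R a b \<and> \<not> R b a"
  shows "transp_on (A \<union> B) R"
  using assms unfolding transp_on_def by blast

lemma le_Suc_mult_if_le_add_mult:
  fixes n a b k :: nat
  assumes "n \<le> a + k * b"
  shows "n \<le> (k + 1) * a \<or> n \<le> (k + 1) * b"
proof (cases "a \<le> b")
  case True
  with assms have "n \<le> b + k * b"
    by linarith
  then show ?thesis
    by simp
next
  case False
  then have "k * b \<le> k * a"
    by simp
  with assms have "n \<le> a + k * a"
    by linarith
  then show ?thesis
    by simp
qed

lemma intervals_split_at:
  fixes x y :: "'a \<Rightarrow> 'b::linorder"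
  assumes "\<And>u. u \<in> W \<Longrightarrow> x u < y u"
  shows "W = {u\<in>W. x u \<le> p \<and> p < y u} \<union> {u\<in>W. y u \<le> p} \<union> {u\<in>W. p < x u}"
    and "{u\<in>W. y u \<le> p} \<inter> {u\<in>W. p < x u} = {}"
    and "{u\<in>W. y u \<le> p} \<subseteq> {u\<in>W. x u < p}"
    and "transp_on {u\<in>W. x u \<le> p \<and> p < y u} (\<lambda>a b. x a < y b)"
    and "\<And>a b. a \<in> {u\<in>W. y u \<le> p} \<Longrightarrow> b \<in> {u\<in>W. p < x u} \<Longrightarrow> x a < y b \<and> \<not> x b < y a"
proof -
  have left: "x u < p" if "u \<in> W" "y u \<le> p" for u
    using assms[OF that(1)] that(2) by (rule order.strict_trans2)
  show "W = {u\<in>W. x u \<le> p \<and> p < y u} \<union> {u\<in>W. y u \<le> p} \<union> {u\<in>W. p < x u}"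
    by auto
  show "{u\<in>W. y u \<le> p} \<inter> {u\<in>W. p < x u} = {}"
    using left by fastforce
  show "{u\<in>W. y u \<le> p} \<subseteq> {u\<in>W. x u < p}"
    using left by blast
  show "transp_on {u\<in>W. x u \<le> p \<and> p < y u} (\<lambda>a b. x a < y b)"
    by (auto simp: transp_on_def intro: order.strict_trans1)
  show "x a < y b \<and> \<not> x b < y a" if "a \<in> {u\<in>W. y u \<le> p}" "b \<in> {u\<in>W. p < x u}" for a b
    using that left[of a] assms[of b] by (auto dest: order.strict_trans)
qed

lemma transp_on_large_subset_intervals:
  fixes x y :: "'a \<Rightarrow> 'b::linorder"
  assumes "finite W" and "card W \<le> 2 ^ k" and "\<And>u. u \<in> W \<Longrightarrow> x u < y u"
  shows "\<exists>W'\<subseteq>W. card W \<le> (k + 1) * card W' \<and> transp_on W' (\<lambda>a b. x a < y b)"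
  using assms
proof (induction k arbitrary: W)
  case 0
  then have "transp_on W (\<lambda>a b. x a < y b)"
    by (auto simp: transp_on_def card_le_Suc0_iff_eq)
  then show ?case
    by auto
next
  case (Suc k)
  show ?case
  proof (cases "W = {}")
    case True
    then show ?thesis
      by (auto simp: transp_on_def)
  next
    case False
    obtain p where p: "2 * card {u\<in>W. x u < p} \<le> card W" "2 * card {u\<in>W. p < x u} \<le> card W"
      using ex_median[OF Suc.prems(1) False, of x] by blast
    define S where "S = {u\<in>W. x u \<le> p \<and> p < y u}"
    define L where "L = {u\<in>W. y u \<le> p}"
    define R where "R = {u\<in>W. p < x u}"
    note split = intervals_split_at[where W = W and x = x and y = y and p = p, OF Suc.prems(3), folded S_def L_def R_def]
    have "S \<subseteq> W" "L \<subseteq> W" "R \<subseteq> W"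
      by (auto simp: S_def L_def R_def)
    then have fin: "finite S" "finite L" "finite R"
      using Suc.prems(1) finite_subset by blast+
    from split(3) have "card L \<le> card {u\<in>W. x u < p}"
      using Suc.prems(1) by (intro card_mono) auto
    then have "card L \<le> 2 ^ k"
      using p(1) Suc.prems(2) by simp
    then obtain L' where L': "L' \<subseteq> L" "card L \<le> (k + 1) * card L'" "transp_on L' (\<lambda>a b. x a < y b)"
      using Suc.IH[OF fin(2)] Suc.prems(3) \<open>L \<subseteq> W\<close> by blast
    have "card R \<le> 2 ^ k"
      using p(2) Suc.prems(2) by (simp add: R_def)
    then obtain R' where R': "R' \<subseteq> R" "card R \<le> (k + 1) * card R'" "transp_on R' (\<lambda>a b. x a < y b)"
      using Suc.IH[OF fin(3)] Suc.prems(3) \<open>R \<subseteq> W\<close> by blast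
    from L'(1,3) R'(1,3) split(5) have "transp_on (L' \<union> R') (\<lambda>a b. x a < y b)"
      by (intro transp_on_Un_stacked) auto
    from split(2) have "card (L' \<union> R') = card L' + card R'"
      using L'(1) R'(1) fin by (intro card_Un_disjoint) (auto intro: finite_subset)
    from split(1) have "card W \<le> card S + card L + card R"
      using card_Un_le[of S L] card_Un_le[of "S \<union> L" R] by simp
    also have "\<dots> \<le> card S + (k + 1) * card (L' \<union> R')"
      using L'(2) R'(2) \<open>card (L' \<union> R') = card L' + card R'\<close> by (simp add: algebra_simps)
    finally have "card W \<le> (Suc k + 1) * card S \<or> card W \<le> (Suc k + 1) * card (L' \<union> R')"
      using le_Suc_mult_if_le_add_mult[of "card W" "card S" "k + 1"] by simp
    with split(4) \<open>transp_on (L' \<union> R') _\<close> \<open>S \<subseteq> W\<close> L'(1) R'(1) \<open>L \<subseteq> W\<close> \<open>R \<subseteq> W\<close>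
    show ?thesis
      by (meson Un_least order.trans)
  qed
qed

lemma transp_on_large_subset:
  fixes x y :: "'a \<Rightarrow> 'b::linorder"
  assumes "finite W" and "card W \<le> 2 ^ k"
  shows "\<exists>W'\<subseteq>W. card W \<le> 2 * (k + 1) * card W' \<and> transp_on W' (\<lambda>a b. x a < y b)"
proof -
  define P where "P = {u\<in>W. x u < y u}"
  define N where "N = {u\<in>W. y u \<le> x u}"
  have "card W = card P + card N"
    using card_Int_Diff[OF assms(1), of "{u. x u < y u}"] by (simp add: P_def N_def Int_def set_diff_eq not_less)
  show ?thesis
  proof (cases "card W \<le> 2 * card P")
    case True
    have "finite P"
      using assms(1) by (simp add: P_def)
    moreover have "card P \<le> 2 ^ k"
      using assms(2) \<open>card W = card P + card N\<close> by linarith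
    moreover have "\<And>u. u \<in> P \<Longrightarrow> x u < y u"
      by (simp add: P_def)
    ultimately obtain W' where W': "W' \<subseteq> P" "card P \<le> (k + 1) * card W'" "transp_on W' (\<lambda>a b. x a < y b)"
      using transp_on_large_subset_intervals[of P k x y] by blast
    from True W'(2) have "card W \<le> 2 * (k + 1) * card W'"
      by linarith
    with W' show ?thesis
      by (intro exI[of _ W']) (auto simp: P_def)
  next
    case False
    \<comment> \<open>\<open>x a < y b \<le> x b < y c\<close>\<close>
    have "x a < y c" if "b \<in> N" "x a < y b" "x b < y c" for a b c
      using that unfolding N_def by (metis (mono_tags) mem_Collect_eq order.strict_trans order.strict_trans1)
    then have "transp_on N (\<lambda>a b. x a < y b)"
      unfolding transp_on_def by blast
    moreover have "card W \<le> 2 * (k + 1) * card N"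
      using False \<open>card W = card P + card N\<close> by (simp add: le_trans)
    ultimately show ?thesis
      by (intro exI[of _ N]) (auto simp: N_def)
  qed
qed

lemma transp_on_large_common_subset:
  fixes x y :: "nat \<Rightarrow> 'a \<Rightarrow> 'b::linorder"
  assumes "finite V" and "card V \<le> 2 ^ k"
  shows "\<exists>W\<subseteq>V. card V \<le> (2 * (k + 1)) ^ j * card W \<and> (\<forall>i<j. transp_on W (\<lambda>a b. x i a < y i b))"
proof (induction j)
  case 0
  show ?case
    by (intro exI[of _ V]) simp
next
  case (Suc j)
  then obtain W where W: "W \<subseteq> V" "card V \<le> (2 * (k + 1)) ^ j * card W"
    "\<forall>i<j. transp_on W (\<lambda>a b. x i a < y i b)"
    by blast
  have "finite W" "card W \<le> 2 ^ k"
    using W(1) assms card_mono[of V W] finite_subset by auto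
  then obtain W' where W': "W' \<subseteq> W" "card W \<le> 2 * (k + 1) * card W'"
    "transp_on W' (\<lambda>a b. x j a < y j b)"
    using transp_on_large_subset[of W k "x j" "y j"] by blast
  have "card V \<le> (2 * (k + 1)) ^ j * (2 * (k + 1) * card W')"
    by (rule order.trans[OF W(2) mult_le_mono2[OF W'(2)]])
  moreover have "transp_on W' (\<lambda>a b. x i a < y i b)" if "i < Suc j" for i
  proof (cases "i = j")
    case True
    with W'(3) show ?thesis
      by simp
  next
    case False
    with that W(3) have "transp_on W (\<lambda>a b. x i a < y i b)"
      by simp
    with W'(1) show ?thesis
      by (blast intro: transp_on_subset)
  qed
  ultimately show ?case
    using W(1) W'(1) by (intro exI[of _ W']) (auto simp: algebra_simps)
qed

definition chains_topped_at :: "'a set \<Rightarrow> ('a \<Rightarrow> 'a \<Rightarrow> bool) \<Rightarrow> 'a \<Rightarrow> 'a set set" where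
  "chains_topped_at W D u =
     {C. C \<subseteq> W \<and> pairwise (\<lambda>a b. D a b \<or> D b a) C \<and> u \<in> C \<and> (\<forall>z\<in>C. z \<noteq> u \<longrightarrow> D z u)}"

definition chain_height :: "'a set \<Rightarrow> ('a \<Rightarrow> 'a \<Rightarrow> bool) \<Rightarrow> 'a \<Rightarrow> nat" where
  "chain_height W D u = Max (card ` chains_topped_at W D u)"

lemma finite_chains_topped_at: "finite W \<Longrightarrow> finite (chains_topped_at W D u)"
  by (rule finite_subset[of _ "Pow W"]) (auto simp: chains_topped_at_def)

lemma singleton_in_chains_topped_at: "u \<in> W \<Longrightarrow> {u} \<in> chains_topped_at W D u"
  by (simp add: chains_topped_at_def)

lemma card_le_chain_height:
  "finite W \<Longrightarrow> C \<in> chains_topped_at W D u \<Longrightarrow> card C \<le> chain_height W D u"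
  unfolding chain_height_def by (simp add: finite_chains_topped_at)

lemma chain_height_attained:
  assumes "finite W" and "u \<in> W"
  obtains C where "C \<in> chains_topped_at W D u" and "card C = chain_height W D u"
proof -
  have "chain_height W D u \<in> card ` chains_topped_at W D u"
    unfolding chain_height_def using assms singleton_in_chains_topped_at[of u W D]
    by (intro Max_in) (auto simp: finite_chains_topped_at)
  then show thesis
    using that by (auto simp: image_iff)
qed

lemma chain_height_strict_mono:
  assumes "finite W" and "irreflp_on W D" and "transp_on W D"
    and "a \<in> W" and "b \<in> W" and "D a b"
  shows "chain_height W D a < chain_height W D b"
proof -
  obtain C where C: "C \<in> chains_topped_at W D a" "card C = chain_height W D a"
    using chain_height_attained[OF assms(1,4)] .
  have below_b: "D z b" if "z \<in> C" for z
  proof (cases "z = a")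
    case True
    with assms(6) show ?thesis
      by simp
  next
    case False
    with that C(1) have "z \<in> W" "D z a"
      by (auto simp: chains_topped_at_def)
    with assms(3-6) show ?thesis
      by (blast intro: transp_onD)
  qed
  have "b \<notin> C"
    using below_b irreflp_onD[OF assms(2,5)] by blast
  have "insert b C \<in> chains_topped_at W D b"
    using C(1) below_b assms(5) by (auto simp: chains_topped_at_def pairwise_insert)
  then have "card (insert b C) \<le> chain_height W D b"
    by (rule card_le_chain_height[OF assms(1)])
  moreover have "finite C"
    using C(1) assms(1) by (auto simp: chains_topped_at_def intro: finite_subset)
  ultimately show ?thesis
    using C(2) \<open>b \<notin> C\<close> by simp
qed

lemma card_le_chain_mult_antichain:
  assumes "finite W" and "irreflp_on W D" and "transp_on W D"
  shows "\<exists>C\<subseteq>W. \<exists>A\<subseteq>W. pairwise (\<lambda>u v. D u v \<or> D v u) C \<and> pairwise (\<lambda>u v. \<not> D u v) A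
           \<and> card W \<le> card C * card A"
proof (cases "W = {}")
  case True
  then show ?thesis
    by auto
next
  case False
  \<comment> \<open>Mirsky's argument: the fibres of the height function are antichains, and there are at most
    as many of them as the length of the longest chain.\<close>
  let ?h = "chain_height W D"
  obtain m where "m \<in> W" and m_max: "\<And>u. u \<in> W \<Longrightarrow> ?h u \<le> ?h m"
    using finite_obtains_arg_max[OF assms(1) False, of ?h] by blast
  obtain C where C: "C \<in> chains_topped_at W D m" "card C = ?h m"
    using chain_height_attained[OF assms(1) \<open>m \<in> W\<close>] .
  have "?h u \<in> {1..?h m}" if "u \<in> W" for u
    using card_le_chain_height[OF assms(1) singleton_in_chains_topped_at[OF that]] m_max[OF that]
    by simp
  then obtain i where "card W \<le> card (?h -` {i} \<inter> W) * card {1..?h m}"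
    using pigeonhole_card[of ?h W "{1..?h m}"] assms(1) \<open>m \<in> W\<close> by fastforce
  moreover have "pairwise (\<lambda>u v. \<not> D u v) (?h -` {i} \<inter> W)"
    using chain_height_strict_mono[OF assms] by (fastforce simp: pairwise_def)
  ultimately show ?thesis
    using C by (intro exI[of _ C] exI[of _ "?h -` {i} \<inter> W"]) (auto simp: chains_topped_at_def mult.commute)
qed

definition tie_break :: "('a \<Rightarrow> 'a \<Rightarrow> bool) \<Rightarrow> ('a \<Rightarrow> 'b::linorder) \<Rightarrow> 'a \<Rightarrow> 'a \<Rightarrow> bool" where
  "tie_break D r u v \<longleftrightarrow> D u v \<and> (D v u \<longrightarrow> r u < r v)"

lemma irreflp_on_tie_break: "irreflp_on W (tie_break D r)"
  by (simp add: irreflp_on_def tie_break_def)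

lemma transp_on_tie_break:
  assumes "transp_on W D"
  shows "transp_on W (tie_break D r)"
proof (rule transp_onI)
  fix a b c
  assume abc: "a \<in> W" "b \<in> W" "c \<in> W" and "tie_break D r a b" "tie_break D r b c"
  then have "D a b" "D b c" "D b a \<Longrightarrow> r a < r b" "D c b \<Longrightarrow> r b < r c"
    by (simp_all add: tie_break_def)
  have "D a c"
    by (rule transp_onD[OF assms abc \<open>D a b\<close> \<open>D b c\<close>])
  moreover have "r a < r c" if "D c a"
  proof -
    have "D b a"
      by (rule transp_onD[OF assms abc(2,3,1) \<open>D b c\<close> that])
    moreover have "D c b"
      by (rule transp_onD[OF assms abc(3,1,2) that \<open>D a b\<close>])
    ultimately show ?thesis
      using \<open>D b a \<Longrightarrow> r a < r b\<close> \<open>D c b \<Longrightarrow> r b < r c\<close> by simp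
  qed
  ultimately show "tie_break D r a c"
    by (simp add: tie_break_def)
qed

lemma tie_break_comparable_iff:
  assumes "inj_on r W" and "u \<in> W" and "v \<in> W" and "u \<noteq> v"
  shows "tie_break D r u v \<or> tie_break D r v u \<longleftrightarrow> D u v \<or> D v u"
  using inj_on_contraD[OF assms(1,4,2,3)] by (auto simp: tie_break_def neq_iff)

lemma card_le_square_chain_or_antichain:
  assumes "finite W" and "transp_on W D"
  shows "\<exists>S\<subseteq>W. (pairwise (\<lambda>u v. D u v \<or> D v u) S \<or> pairwise (\<lambda>u v. \<not> D u v) S)
           \<and> card W \<le> card S ^ 2"
proof -
  obtain r :: "'a \<Rightarrow> nat" where r: "inj_on r W"
    using finite_imp_inj_to_nat_seg[OF assms(1)] by blast
  have "\<exists>C\<subseteq>W. \<exists>A\<subseteq>W. pairwise (\<lambda>u v. tie_break D r u v \<or> tie_break D r v u) C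
      \<and> pairwise (\<lambda>u v. \<not> tie_break D r u v) A \<and> card W \<le> card C * card A"
    using card_le_chain_mult_antichain[OF assms(1) irreflp_on_tie_break transp_on_tie_break[OF assms(2)]] .
  then obtain C A where "C \<subseteq> W" "A \<subseteq> W" and C: "pairwise (\<lambda>u v. tie_break D r u v \<or> tie_break D r v u) C"
    and A: "pairwise (\<lambda>u v. \<not> tie_break D r u v) A" and CA: "card W \<le> card C * card A"
    by (elim exE conjE)
  have "D u v \<or> D v u" if "u \<in> C" "v \<in> C" "u \<noteq> v" for u v
    using C that \<open>C \<subseteq> W\<close> tie_break_comparable_iff[OF r, of u v D] by (auto simp: pairwise_def)
  then have "pairwise (\<lambda>u v. D u v \<or> D v u) C"
    by (simp add: pairwise_def)
  moreover have "\<not> D u v" if "u \<in> A" "v \<in> A" "u \<noteq> v" for u v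
    using A that \<open>A \<subseteq> W\<close> tie_break_comparable_iff[OF r, of u v D] by (auto simp: pairwise_def)
  then have "pairwise (\<lambda>u v. \<not> D u v) A"
    by (simp add: pairwise_def)
  moreover have "card C * card A \<le> card C ^ 2 \<or> card C * card A \<le> card A ^ 2"
    unfolding power2_eq_square by (meson le_cases mult_le_mono1 mult_le_mono2)
  with CA have "card W \<le> card C ^ 2 \<or> card W \<le> card A ^ 2"
    by linarith
  ultimately show ?thesis
    using \<open>C \<subseteq> W\<close> \<open>A \<subseteq> W\<close> by blast
qed

lemma pow_mult_fact_le_fact_add: "(k + 1) ^ d * fact k \<le> (fact (k + d) :: nat)"
proof (induction d)
  case 0
  show ?case
    by simp
next
  case (Suc d)
  have "(k + 1) ^ Suc d * fact k = (k + 1) * ((k + 1) ^ d * fact k)"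
    by (simp only: power_Suc mult.assoc)
  also have "\<dots> \<le> (k + d + 1) * fact (k + d)"
    using Suc.IH by (intro mult_le_mono) auto
  also have "\<dots> = fact (k + Suc d)"
    by (simp add: algebra_simps)
  finally show ?case .
qed

lemma pow_le_fact_mult_pow2: "(k + 1) ^ d \<le> fact d * 2 ^ d * (2 ^ k :: nat)"
proof -
  have "(k + 1) ^ d * fact k \<le> fact d * ((k + d) choose d) * fact k"
    using pow_mult_fact_le_fact_add[of k d] binomial_fact_lemma[of d "k + d"] by (simp add: algebra_simps)
  then have "(k + 1) ^ d \<le> fact d * ((k + d) choose d)"
    by simp
  also have "\<dots> \<le> fact d * 2 ^ (k + d)"
    using binomial_le_pow2[of "k + d" d] by simp
  finally show ?thesis
    by (simp add: power_add mult_ac)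
qed

lemma absorb_logarithmic_factor:
  fixes n k s t :: nat
  assumes "n \<le> (2 * (k + 1)) ^ t * s ^ 2" and "2 ^ k \<le> 2 * n"
  shows "n \<le> 2 * 16 ^ t * fact (2 * t) * s ^ 4"
proof -
  define q where "q = 2 * (k + 1)"
  have "n * n \<le> (q ^ t * s ^ 2) ^ 2"
    using mult_le_mono[OF assms(1) assms(1)] by (simp add: q_def power2_eq_square)
  also have "\<dots> = q ^ (2 * t) * s ^ 4"
    by (simp add: power_mult_distrib mult.commute flip: power_mult)
  also have "\<dots> = 4 ^ t * (k + 1) ^ (2 * t) * s ^ 4"
    unfolding q_def power_mult_distrib power_mult by simp
  also have "\<dots> \<le> 4 ^ t * (fact (2 * t) * 2 ^ (2 * t) * 2 ^ k) * s ^ 4"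
    using pow_le_fact_mult_pow2[of k "2 * t"] by simp
  also have "\<dots> \<le> 4 ^ t * (fact (2 * t) * 2 ^ (2 * t) * (2 * n)) * s ^ 4"
    using assms(2) by simp
  also have "\<dots> = n * (2 * (4 ^ t * 2 ^ (2 * t)) * fact (2 * t) * s ^ 4)"
    by (simp add: algebra_simps)
  also have "4 ^ t * 2 ^ (2 * t) = (16 :: nat) ^ t"
    by (simp add: power_mult flip: power_mult_distrib)
  finally show ?thesis
    by (cases "n = 0") simp_all
qed

lemma power_powr_inverse:
  fixes s :: real
  assumes "0 \<le> s" and "n > 0"
  shows "(s ^ n) powr (1 / n) = s"
proof (cases "s = 0")
  case True
  with assms(2) show ?thesis
    by simp
next
  case False
  with assms(1) have "s > 0"
    by simp
  then have "(s ^ n) powr (1 / n) = (s powr n) powr (1 / n)"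
    by (simp add: powr_realpow)
  also have "\<dots> = s"
    using assms(2) \<open>s > 0\<close> by (simp add: powr_powr)
  finally show ?thesis .
qed

lemma powr_le_mult_if_le_mult_pow:
  fixes x s M :: real
  assumes "0 \<le> x" and "0 \<le> s" and "0 \<le> M" and "n > 0" and "x \<le> M * s ^ n"
  shows "x powr (1 / n) \<le> M powr (1 / n) * s"
proof -
  have "x powr (1 / n) \<le> (M * s ^ n) powr (1 / n)"
    using assms(1,5) by (rule powr_mono2[rotated]) simp
  also have "\<dots> = M powr (1 / n) * (s ^ n) powr (1 / n)"
    using assms(2,3) by (simp add: powr_mult)
  also have "(s ^ n) powr (1 / n) = s"
    using assms(2,4) by (rule power_powr_inverse)
  finally show ?thesis .
qed

lemma transp_on_vec_prec:
  assumes "\<forall>i<t. transp_on W (\<lambda>u v. fst u ! i < snd v ! i)"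
  shows "transp_on W (\<lambda>u v. vec_prec t (fst u) (snd v))"
  using assms unfolding transp_on_def vec_prec_def by blast

lemma qc_clique_iff_pairwise:
  "qc_clique t S \<longleftrightarrow> pairwise (\<lambda>u v. vec_prec t (fst u) (snd v) \<or> vec_prec t (fst v) (snd u)) S"
  by (auto simp: qc_clique_def qc_adj_def pairwise_def)

lemma qc_indep_iff_pairwise:
  "qc_indep t S \<longleftrightarrow> pairwise (\<lambda>u v. \<not> vec_prec t (fst u) (snd v)) S"
  by (auto simp: qc_indep_def qc_adj_def pairwise_def)

lemma ex_large_qc_clique_or_indep:
  assumes "finite V"
  shows "\<exists>S\<subseteq>V. (qc_clique t S \<or> qc_indep t S) \<and> card V \<le> 2 * 16 ^ t * fact (2 * t) * card S ^ 4"
proof (cases "V = {}")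
  case True
  then show ?thesis
    by (auto simp: qc_clique_def)
next
  case False
  define k where "k = ceillog2 (card V)"
  have "card V \<le> 2 ^ k" "2 ^ k \<le> 2 * card V"
    using le_two_power_ceillog2 two_power_ceillog2_gt[of "card V"] False assms
    by (auto simp: k_def card_gt_0_iff less_imp_le)
  obtain W where "W \<subseteq> V" and W: "card V \<le> (2 * (k + 1)) ^ t * card W"
    and coordinatewise: "\<forall>i<t. transp_on W (\<lambda>u v. fst u ! i < snd v ! i)"
    using transp_on_large_common_subset[OF assms \<open>card V \<le> 2 ^ k\<close>, of t "\<lambda>i u. fst u ! i" "\<lambda>i u. snd u ! i"]
    by blast
  from coordinatewise have "transp_on W (\<lambda>u v. vec_prec t (fst u) (snd v))"
    by (rule transp_on_vec_prec)
  moreover have "finite W"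
    using \<open>W \<subseteq> V\<close> assms by (rule finite_subset)
  ultimately obtain S where "S \<subseteq> W" and S: "qc_clique t S \<or> qc_indep t S" "card W \<le> card S ^ 2"
    using card_le_square_chain_or_antichain[of W] by (auto simp: qc_clique_iff_pairwise qc_indep_iff_pairwise)
  have "card V \<le> (2 * (k + 1)) ^ t * card S ^ 2"
    using W mult_le_mono2[OF S(2)] by (rule order.trans)
  then have "card V \<le> 2 * 16 ^ t * fact (2 * t) * card S ^ 4"
    using \<open>2 ^ k \<le> 2 * card V\<close> by (rule absorb_logarithmic_factor)
  with S(1) \<open>S \<subseteq> W\<close> \<open>W \<subseteq> V\<close> show ?thesis
    by blast
qed

theorem theorem4p1:
  shows "\<exists>c::real. c > 0 \<and> (\<forall>t::nat. t > 0 \<longrightarrow> (\<exists>\<alpha>::real. \<alpha> > 0 \<and>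
     (\<forall>V. qc_graph t V \<longrightarrow>
        (\<exists>S\<subseteq>V. (qc_clique t S \<or> qc_indep t S) \<and>
                 real (card S) \<ge> \<alpha> * real (card V) powr c))))"
proof (rule exI[of _ "1 / 4"], intro conjI allI impI)
  \<comment> \<open>The bound holds for every \<open>t\<close>.\<close>
  fix t :: nat
  define K :: nat where "K = 2 * 16 ^ t * fact (2 * t)"
  have "K > 0"
    by (simp add: K_def)
  have "\<exists>S\<subseteq>V. (qc_clique t S \<or> qc_indep t S) \<and>
          real (card S) \<ge> 1 / real K powr (1 / 4) * real (card V) powr (1 / 4)" if "qc_graph t V" for V
  proof -
    from that have "finite V"
      by (simp add: qc_graph_def)
    then obtain S where "S \<subseteq> V" "qc_clique t S \<or> qc_indep t S" and "card V \<le> K * card S ^ 4"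
      using ex_large_qc_clique_or_indep[of V t] unfolding K_def by blast
    then have "real (card V) \<le> real K * real (card S) ^ 4"
      by (metis of_nat_mono of_nat_mult of_nat_power)
    then have "real (card V) powr (1 / 4) \<le> real K powr (1 / 4) * real (card S)"
      using powr_le_mult_if_le_mult_pow[of _ _ _ 4] by simp
    with \<open>K > 0\<close> \<open>S \<subseteq> V\<close> \<open>qc_clique t S \<or> qc_indep t S\<close> show ?thesis
      by (auto simp: field_simps)
  qed
  with \<open>K > 0\<close> show "\<exists>\<alpha>>0. \<forall>V. qc_graph t V \<longrightarrow>
      (\<exists>S\<subseteq>V. (qc_clique t S \<or> qc_indep t S) \<and> real (card S) \<ge> \<alpha> * real (card V) powr (1 / 4))"
    by (intro exI[of _ "1 / real K powr (1 / 4)"]) simp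
qed simp

end
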